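(* Let $h>0$, let $(\tau,\mu):\mathbb R\to\mathbb R^2$ be a solution of the system $\tau'=1+K(\tau,\mu)\mu$, $\mu'=-K(\tau,\mu)\tau$, and set $k(s)=K(\tau(s),\mu(s))$. Then $k$ has at most one zero $s_1$; if it has one, then $k<0$ on $(-\infty,s_1)$ and $k>0$ on $(s_1,+\infty)$.
   Context: Fix $h>0$. For $(\tau,\mu)\in\mathbb R^2$ put $r^2=\tau^2+\mu^2$ and define $K:\mathbb R^2\to\mathbb R$ by $$K(\tau,\mu)=\frac{2\big(\tau^2+h^2(1+\mu^2)\big)\tau+(h^2-1)(1+\mu^2)\mu}{(1+r^2)(h^2+r^2)}.$$ Consider the autonomous ODE system $\tau'=1+K(\tau,\mu)\mu$, $\mu'=-K(\tau,\mu)\tau$ for functions $s\mapsto(\tau(s),\mu(s))$; all its solutions are defined on $\mathbb R$. *)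

theory Defs
  imports "HOL-Analysis.Analysis"
begin

definition Kfun :: "real \<Rightarrow> real \<Rightarrow> real \<Rightarrow> real" where
  "Kfun h \<tau> \<mu> =
     (2 * (\<tau>^2 + h^2 * (1 + \<mu>^2)) * \<tau> + (h^2 - 1) * (1 + \<mu>^2) * \<mu>)
     / ((1 + (\<tau>^2 + \<mu>^2)) * (h^2 + (\<tau>^2 + \<mu>^2)))"

end

theory Submission
  imports Defs
begin

text \<open>Along a solution, \<open>\<tau>' = 1\<close> and \<open>\<mu>' = 0\<close> wherever \<open>k = 0\<close>, and there the numerator of \<open>K\<close>
  has derivative \<open>\<partial>\<^sub>\<tau>N = 6\<tau>\<^sup>2 + 2h\<^sup>2(1 + \<mu>\<^sup>2) > 0\<close>. So \<open>k\<close> is continuous and crosses every one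
  of its zeros upwards with positive slope; such a function cannot return to zero after a
  zero (the first zero after it would have to be approached from below), nor be nonnegative
  before it.\<close>

lemma pos_right_of_upcrossing_zero:
  fixes g :: "real \<Rightarrow> real"
  assumes cont: "continuous_on UNIV g"
    and up: "\<And>x. g x = 0 \<Longrightarrow> \<exists>l>0. (g has_real_derivative l) (at x)"
    and "g a = 0" "a < b"
  shows "g b > 0"
proof (rule ccontr)
  assume "\<not> g b > 0"
  have IVT: "\<exists>z. x \<le> z \<and> z \<le> y \<and> g z = 0" if "g y \<le> 0" "0 \<le> g x" "x \<le> y" for x y
    using IVT2'[OF that] continuous_on_subset[OF cont] by blast
  obtain c where c: "a < c" "c < b" "g c > 0"
  proof -
    obtain l where "l > 0" "(g has_real_derivative l) (at a)" using up \<open>g a = 0\<close> by blast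
    then obtain d where d: "d > 0" "\<And>e. e > 0 \<Longrightarrow> e < d \<Longrightarrow> g a < g (a + e)"
      using DERIV_pos_inc_right by blast
    define e where "e = min d (b - a) / 2"
    have "0 < e" "e < d" "e < b - a"
      using \<open>d > 0\<close> \<open>a < b\<close> by (auto simp: e_def)
    with d(2) \<open>g a = 0\<close> show thesis
      by (intro that[of "a + e"]) auto
  qed
  define Z where "Z = {c..b} \<inter> g -` {0}"
  have "closed Z"
    unfolding Z_def using cont by (intro closed_Int closed_vimage) auto
  moreover have "Z \<noteq> {}"
    using IVT[of b c] \<open>\<not> g b > 0\<close> c by (auto simp: Z_def)
  moreover have "bdd_below Z"
    by (auto simp: Z_def)
  ultimately have "Inf Z \<in> Z"
    using closed_contains_Inf by blast
  define t where "t = Inf Z"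
  have t: "g t = 0" "c < t" "t \<le> b"
    using \<open>Inf Z \<in> Z\<close> c by (auto simp: t_def Z_def less_eq_real_def)
  obtain e where e: "0 < e" "e < t - c" "g (t - e) < 0"
  proof -
    obtain l where "l > 0" "(g has_real_derivative l) (at t)" using up t(1) by blast
    then obtain d where "d > 0" "\<And>e. e > 0 \<Longrightarrow> e < d \<Longrightarrow> g (t - e) < g t"
      using DERIV_pos_inc_left by blast
    with t show thesis
      by (intro that[of "min d (t - c) / 2"]) auto
  qed
  then obtain z where "c \<le> z" "z \<le> t - e" "g z = 0"
    using IVT[of "t - e" c] c by auto
  with t have "z \<in> Z" "z < Inf Z"
    using e by (auto simp: Z_def t_def)
  with \<open>bdd_below Z\<close> show False
    using cInf_lower by fastforce
qed

lemma neg_left_of_upcrossing_zero: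
  fixes g :: "real \<Rightarrow> real"
  assumes cont: "continuous_on UNIV g"
    and up: "\<And>x. g x = 0 \<Longrightarrow> \<exists>l>0. (g has_real_derivative l) (at x)"
    and "g a = 0" "b < a"
  shows "g b < 0"
proof -
  define g' where "g' = (\<lambda>x. - g (- x))"
  have "continuous_on UNIV g'"
    unfolding g'_def by (intro continuous_intros continuous_on_compose2[OF cont]) auto
  moreover have "\<exists>l>0. (g' has_real_derivative l) (at x)" if zero: "g' x = 0" for x
  proof -
    obtain l where "l > 0" "(g has_real_derivative l) (at (- x))"
      using up[of "- x"] zero by (auto simp: g'_def)
    then have "(g' has_real_derivative l) (at x)"
      unfolding g'_def using DERIV_minus DERIV_mirror by fastforce
    with \<open>l > 0\<close> show ?thesis by blast
  qed
  ultimately have "g' (- b) > 0"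
    using pos_right_of_upcrossing_zero[of g' "- a" "- b"] assms(3,4) by (auto simp: g'_def)
  then show ?thesis by (simp add: g'_def)
qed

lemma DERIV_divide_at_numerator_zero:
  fixes f g :: "real \<Rightarrow> real"
  assumes "(f has_real_derivative f') (at x)" "(g has_real_derivative g') (at x)"
    and "f x = 0" "g x \<noteq> 0"
  shows "((\<lambda>x. f x / g x) has_real_derivative f' / g x) (at x)"
  using DERIV_divide[OF assms(1,2,4)] assms(3,4) by (simp add: power2_eq_square)

lemma Kfun_denominator_pos:
  fixes h x y :: real
  assumes "h > 0"
  shows "(1 + (x\<^sup>2 + y\<^sup>2)) * (h\<^sup>2 + (x\<^sup>2 + y\<^sup>2)) > 0"
  using assms by (intro mult_pos_pos add_pos_nonneg) auto

lemma isCont_Kfun: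
  fixes h :: real and \<tau> \<mu> :: "real \<Rightarrow> real"
  assumes "h > 0" "isCont \<tau> s" "isCont \<mu> s"
  shows "isCont (\<lambda>s. Kfun h (\<tau> s) (\<mu> s)) s"
  unfolding Kfun_def
  using assms Kfun_denominator_pos[of h "\<tau> s" "\<mu> s"] by (intro continuous_intros) auto

lemma Kfun_upcrossing:
  fixes h :: real and \<tau> \<mu> :: "real \<Rightarrow> real"
  assumes "h > 0"
    and d\<tau>: "(\<tau> has_real_derivative 1) (at s)"
    and d\<mu>: "(\<mu> has_real_derivative 0) (at s)"
    and zero: "Kfun h (\<tau> s) (\<mu> s) = 0"
  shows "\<exists>l>0. ((\<lambda>s. Kfun h (\<tau> s) (\<mu> s)) has_real_derivative l) (at s)"
proof -
  define N where "N = (\<lambda>s. 2 * ((\<tau> s)\<^sup>2 + h\<^sup>2 * (1 + (\<mu> s)\<^sup>2)) * \<tau> s + (h\<^sup>2 - 1) * (1 + (\<mu> s)\<^sup>2) * \<mu> s)"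
  define D where "D = (\<lambda>s. (1 + ((\<tau> s)\<^sup>2 + (\<mu> s)\<^sup>2)) * (h\<^sup>2 + ((\<tau> s)\<^sup>2 + (\<mu> s)\<^sup>2)))"
  define N' where "N' = 6 * (\<tau> s)\<^sup>2 + 2 * h\<^sup>2 * (1 + (\<mu> s)\<^sup>2)"
  have K: "(\<lambda>s. Kfun h (\<tau> s) (\<mu> s)) = (\<lambda>s. N s / D s)"
    by (simp add: fun_eq_iff Kfun_def N_def D_def)
  have "D s > 0"
    unfolding D_def using Kfun_denominator_pos[OF \<open>h > 0\<close>] .
  moreover from zero have "N s / D s = 0"
    by (simp add: Kfun_def N_def D_def)
  ultimately have "N s = 0"
    by simp
  have "(N has_real_derivative N') (at s)"
    unfolding N_def N'_def
    by (rule derivative_eq_intros d\<tau> d\<mu> refl | simp add: algebra_simps power2_eq_square)+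
  moreover have "\<exists>D'. (D has_real_derivative D') (at s)"
    unfolding D_def by (rule exI, (rule derivative_eq_intros d\<tau> d\<mu> refl)+)
  then obtain D' where "(D has_real_derivative D') (at s)" ..
  ultimately have "((\<lambda>s. N s / D s) has_real_derivative N' / D s) (at s)"
    using DERIV_divide_at_numerator_zero \<open>N s = 0\<close> \<open>D s > 0\<close> by simp
  moreover have "N' / D s > 0"
    unfolding N'_def using \<open>h > 0\<close> \<open>D s > 0\<close>
    by (intro divide_pos_pos add_nonneg_pos mult_pos_pos add_pos_nonneg) auto
  ultimately show ?thesis
    unfolding K by blast
qed

theorem claim4:
  fixes h :: real and \<tau> \<mu> :: "real \<Rightarrow> real"
  assumes hpos: "h > 0"
    and d\<tau>: "\<And>s. (\<tau> has_real_derivative (1 + Kfun h (\<tau> s) (\<mu> s) * \<mu> s)) (at s)"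
    and d\<mu>: "\<And>s. (\<mu> has_real_derivative (- Kfun h (\<tau> s) (\<mu> s) * \<tau> s)) (at s)"
  shows "(\<forall>s1 s2. Kfun h (\<tau> s1) (\<mu> s1) = 0 \<and> Kfun h (\<tau> s2) (\<mu> s2) = 0 \<longrightarrow> s1 = s2)
       \<and> (\<forall>s1. Kfun h (\<tau> s1) (\<mu> s1) = 0 \<longrightarrow>
            (\<forall>s. s < s1 \<longrightarrow> Kfun h (\<tau> s) (\<mu> s) < 0) \<and>
            (\<forall>s. s > s1 \<longrightarrow> Kfun h (\<tau> s) (\<mu> s) > 0))"
proof -
  define k where "k = (\<lambda>s. Kfun h (\<tau> s) (\<mu> s))"
  have cont: "continuous_on UNIV k"
    unfolding k_def using hpos d\<tau> d\<mu>
    by (intro continuous_at_imp_continuous_on ballI isCont_Kfun DERIV_isCont) auto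
  have up: "\<exists>l>0. (k has_real_derivative l) (at s)" if "k s = 0" for s
    using Kfun_upcrossing[OF hpos, of \<tau> s \<mu>] d\<tau>[of s] d\<mu>[of s] that
    by (simp add: k_def)
  have right: "k s > 0" if "k s1 = 0" "s1 < s" for s1 s
    using pos_right_of_upcrossing_zero[OF cont up that] .
  have left: "k s < 0" if "k s1 = 0" "s < s1" for s1 s
    using neg_left_of_upcrossing_zero[OF cont up that] .
  have "s1 = s2" if "k s1 = 0" "k s2 = 0" for s1 s2
    using right[of s1 s2] right[of s2 s1] that by (cases s1 s2 rule: linorder_cases) auto
  with left right show ?thesis
    unfolding k_def by blast
qed

end
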